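(* Let $\mathbf X,\mathbf Y,\mathbf Z$ be pairwise disjoint node sets in an MPDAG $\mathcal G=(\mathbf V,\mathbf E)$. Suppose there is a proper possibly causal path from $\mathbf X$ to $\mathbf Y$ in $\mathcal G$ that starts with an undirected edge and contains no node of $\mathbf Z$. Then there is such a path $q=\langle X=V_0,V_1,\dots,V_k=Y\rangle$ with $X\in\mathbf X$, $Y\in\mathbf Y$, $k\ge1$, and two DAGs $\mathcal D^1,\mathcal D^2\in[\mathcal G]$ such that the path on the same node sequence is $X\to V_1\to\cdots\to Y$ in $\mathcal D^1$ and is $X\leftarrow V_1\to V_2\to\cdots\to Y$ in $\mathcal D^2$ (that is, $X\leftarrow Y$ when $k=1$).
   Context: An MPDAG $\mathcal G=(\mathbf V,\mathbf E)$ is a graph with directed ($\to$) and undirected ($-$) edges and no directed cycles, obtained from a CPDAG (the graph representing a Markov equivalence class of DAGs) by orienting some undirected edges and closing under Meek's orientation rules R1–R4; every DAG is an MPDAG. $[\mathcal G]$ is the set of DAGs with the same nodes, adjacencies and directed edges as $\mathcal G$. A path is a sequence of distinct nodes with successive nodes adjacent; a path from $\mathbf X$ to $\mathbf Y$ runs from some $X\in\mathbf X$ to some $Y\in\mathbf Y$ and is proper if only its first node is in $\mathbf X$. A path $\langle V_1,\dots,V_k\rangle$ is possibly causal if $\mathcal G$ contains no edge $V_i\leftarrow V_j$ with $1\le i<j\le k$. *)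

theory Defs
  imports Main
begin

text \<open>A partially directed graph on node set V is given by a set D of directed
edges ((a,b) means a -> b) and a symmetric set U of undirected edges.\<close>

definition adj :: "('v \<times> 'v) set \<Rightarrow> ('v \<times> 'v) set \<Rightarrow> 'v \<Rightarrow> 'v \<Rightarrow> bool" where
  "adj D U a b \<longleftrightarrow> (a,b) \<in> D \<or> (b,a) \<in> D \<or> (a,b) \<in> U"

definition wf_pdag :: "'v set \<Rightarrow> ('v \<times> 'v) set \<Rightarrow> ('v \<times> 'v) set \<Rightarrow> bool" where
  "wf_pdag V D U \<longleftrightarrow> finite V \<and> D \<subseteq> V \<times> V \<and> U \<subseteq> V \<times> V \<and> sym U
     \<and> (\<forall>a. (a,a) \<notin> D \<and> (a,a) \<notin> U)
     \<and> (\<forall>a b. (a,b) \<in> D \<longrightarrow> (b,a) \<notin> D \<and> (a,b) \<notin> U)"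

definition is_DAG :: "'v set \<Rightarrow> ('v \<times> 'v) set \<Rightarrow> bool" where
  "is_DAG V D \<longleftrightarrow> wf_pdag V D {} \<and> acyclic D"

definition v_structures :: "('v \<times> 'v) set \<Rightarrow> ('v \<times> 'v \<times> 'v) set" where
  "v_structures D = {(a,c,b). (a,c) \<in> D \<and> (b,c) \<in> D \<and> a \<noteq> b \<and> \<not> adj D {} a b}"

text \<open>Markov equivalence of DAGs (Verma--Pearl characterisation: same skeleton,
same v-structures).\<close>
definition markov_equiv :: "'v set \<Rightarrow> ('v \<times> 'v) set \<Rightarrow> ('v \<times> 'v) set \<Rightarrow> bool" where
  "markov_equiv V D1 D2 \<longleftrightarrow> is_DAG V D1 \<and> is_DAG V D2
     \<and> (\<forall>a b. adj D1 {} a b \<longleftrightarrow> adj D2 {} a b)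
     \<and> v_structures D1 = v_structures D2"

definition is_CPDAG :: "'v set \<Rightarrow> ('v \<times> 'v) set \<Rightarrow> ('v \<times> 'v) set \<Rightarrow> bool" where
  "is_CPDAG V D U \<longleftrightarrow> (\<exists>D0. is_DAG V D0
     \<and> D = {(a,b). \<forall>D'. markov_equiv V D0 D' \<longrightarrow> (a,b) \<in> D'}
     \<and> U = {(a,b). adj D0 {} a b \<and> (a,b) \<notin> D \<and> (b,a) \<notin> D})"

text \<open>Meek's rules R1--R4: orient the undirected edge a - b as a -> b.\<close>
definition meek_applicable :: "('v \<times> 'v) set \<Rightarrow> ('v \<times> 'v) set \<Rightarrow> 'v \<Rightarrow> 'v \<Rightarrow> bool" where
  "meek_applicable D U a b \<longleftrightarrow> (a,b) \<in> U \<and>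
     ((\<exists>c. (c,a) \<in> D \<and> c \<noteq> b \<and> \<not> adj D U c b)
    \<or> (\<exists>c. (a,c) \<in> D \<and> (c,b) \<in> D)
    \<or> (\<exists>c d. (a,c) \<in> U \<and> (a,d) \<in> U \<and> (c,b) \<in> D \<and> (d,b) \<in> D \<and> c \<noteq> d \<and> \<not> adj D U c d)
    \<or> (\<exists>c d. adj D U a c \<and> (a,d) \<in> U \<and> (d,c) \<in> D \<and> (c,b) \<in> D \<and> b \<noteq> d \<and> \<not> adj D U b d))"

definition meek_step :: "(('v \<times> 'v) set \<times> ('v \<times> 'v) set) \<Rightarrow> (('v \<times> 'v) set \<times> ('v \<times> 'v) set) \<Rightarrow> bool" where
  "meek_step G G' \<longleftrightarrow> (\<exists>a b. meek_applicable (fst G) (snd G) a b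
      \<and> G' = (insert (a,b) (fst G), snd G - {(a,b),(b,a)}))"

definition meek_closure :: "(('v \<times> 'v) set \<times> ('v \<times> 'v) set) \<Rightarrow> (('v \<times> 'v) set \<times> ('v \<times> 'v) set) \<Rightarrow> bool" where
  "meek_closure G0 G \<longleftrightarrow> meek_step\<^sup>*\<^sup>* G0 G \<and> (\<forall>a b. \<not> meek_applicable (fst G) (snd G) a b)"

definition is_MPDAG :: "'v set \<Rightarrow> ('v \<times> 'v) set \<Rightarrow> ('v \<times> 'v) set \<Rightarrow> bool" where
  "is_MPDAG V D U \<longleftrightarrow> wf_pdag V D U \<and> acyclic D \<and>
     (\<exists>DC UC Or. is_CPDAG V DC UC \<and> Or \<subseteq> UC \<and> (\<forall>a b. (a,b) \<in> Or \<longrightarrow> (b,a) \<notin> Or)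
        \<and> meek_closure (DC \<union> Or, UC - (Or \<union> Or\<inverse>)) (D, U))"

definition consistent_DAGs :: "'v set \<Rightarrow> ('v \<times> 'v) set \<Rightarrow> ('v \<times> 'v) set \<Rightarrow> ('v \<times> 'v) set set" where
  "consistent_DAGs V D U = {D'. is_DAG V D' \<and> D \<subseteq> D' \<and> (\<forall>a b. adj D' {} a b \<longleftrightarrow> adj D U a b)}"

definition is_path :: "'v set \<Rightarrow> ('v \<times> 'v) set \<Rightarrow> ('v \<times> 'v) set \<Rightarrow> 'v list \<Rightarrow> bool" where
  "is_path V D U p \<longleftrightarrow> p \<noteq> [] \<and> distinct p \<and> set p \<subseteq> V
     \<and> (\<forall>i. Suc i < length p \<longrightarrow> adj D U (p ! i) (p ! Suc i))"

definition possibly_causal :: "('v \<times> 'v) set \<Rightarrow> 'v list \<Rightarrow> bool" where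
  "possibly_causal D p \<longleftrightarrow> (\<forall>i j. i < j \<and> j < length p \<longrightarrow> (p ! j, p ! i) \<notin> D)"

definition proper_from_to :: "'v set \<Rightarrow> 'v set \<Rightarrow> 'v list \<Rightarrow> bool" where
  "proper_from_to X Y p \<longleftrightarrow> p \<noteq> [] \<and> hd p \<in> X \<and> last p \<in> Y
     \<and> (\<forall>i. 0 < i \<and> i < length p \<longrightarrow> p ! i \<notin> X)"

definition good_path :: "'v set \<Rightarrow> ('v \<times> 'v) set \<Rightarrow> ('v \<times> 'v) set \<Rightarrow> 'v set \<Rightarrow> 'v set \<Rightarrow> 'v set \<Rightarrow> 'v list \<Rightarrow> bool" where
  "good_path V D U X Y Z p \<longleftrightarrow> is_path V D U p \<and> proper_from_to X Y p \<and> possibly_causal D p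
     \<and> length p \<ge> 2 \<and> (p ! 0, p ! 1) \<in> U \<and> set p \<inter> Z = {}"

end

theory Submission
  imports Defs
begin

text \<open>Any path \<open>q = \<langle>X, V\<^sub>1, \<dots>, Y\<rangle>\<close> of the required kind works. Closure under Meek's rules R1,
R2 and R4 implies that a directed path into one endpoint of an undirected edge can be shortened
to a single edge or rerouted into the other endpoint. By induction along \<open>q\<close> it follows that
\<open>\<G>\<close> has no directed path from a later node of \<open>q\<close> to an earlier one, nor, since \<open>X - V\<^sub>1\<close> is
undirected, from \<open>X\<close> to \<open>V\<^sub>1\<close>. So both the order of \<open>q\<close> and the order with its first two nodes
swapped are compatible with the directed part of \<open>\<G>\<close>: adding the edges of either order keeps
the directed part acyclic, and orienting every undirected edge along a topological numbering of
the result gives \<open>\<D>\<^sup>1\<close> and \<open>\<D>\<^sup>2\<close>.\<close>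

lemma finite_acyclic_injective_rank:
  assumes "finite V" and "acyclic R"
  shows "\<exists>f :: 'a \<Rightarrow> nat. inj_on f V \<and> (\<forall>a b. (a, b) \<in> R \<longrightarrow> a \<in> V \<longrightarrow> b \<in> V \<longrightarrow> f a < f b)"
  using assms(1)
proof (induction V rule: finite_remove_induct)
  case empty
  show ?case by simp
next
  case (remove A)
  have "wf (R \<inter> A \<times> A)"
    using remove.hyps(1) acyclic_subset[OF assms(2)] by (intro finite_acyclic_wf) auto
  then obtain m where "m \<in> A" and minimal: "\<forall>y. (y, m) \<in> R \<inter> A \<times> A \<longrightarrow> y \<notin> A"
    using remove.hyps(2) unfolding wf_eq_minimal by blast
  then obtain g :: "'a \<Rightarrow> nat" where "inj_on g (A - {m})"
    and g_mono: "\<forall>a b. (a, b) \<in> R \<longrightarrow> a \<in> A - {m} \<longrightarrow> b \<in> A - {m} \<longrightarrow> g a < g b"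
    using remove.IH by blast
  define f where "f x = (if x = m then 0 else Suc (g x))" for x
  have "inj_on f A"
    using \<open>inj_on g (A - {m})\<close> unfolding f_def inj_on_def by auto
  moreover have "f a < f b" if "(a, b) \<in> R" "a \<in> A" "b \<in> A" for a b
  proof -
    have "b \<noteq> m" using that minimal by blast
    then show ?thesis using that g_mono unfolding f_def by auto
  qed
  ultimately show ?case by blast
qed

lemma acyclic_Un_strict_order:
  assumes "acyclic D" and "trans E" and "irrefl E"
    and D_within_E: "\<And>a b. (a, b) \<in> D\<^sup>* \<Longrightarrow> a \<in> Field E \<Longrightarrow> b \<in> Field E \<Longrightarrow> (a, b) \<in> E\<^sup>="
  shows "acyclic (D \<union> E)"
proof -
  have E_step: "(a, c) \<in> E" if "(a, b) \<in> E" "(b, b') \<in> D\<^sup>*" "(b', c) \<in> E" for a b b' c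
  proof -
    have "(b, b') \<in> E\<^sup>=" using D_within_E that by (auto simp: Field_def)
    then show ?thesis using that \<open>trans E\<close> unfolding trans_def by blast
  qed
  have through_E: "(x, y) \<in> D\<^sup>+ \<or> (\<exists>a b. (x, a) \<in> D\<^sup>* \<and> (a, b) \<in> E \<and> (b, y) \<in> D\<^sup>*)"
    if "(x, y) \<in> (D \<union> E)\<^sup>+" for x y
    using that
  proof (induction rule: trancl_induct)
    case (step y z)
    from step.hyps(2) show ?case
    proof
      assume "(y, z) \<in> D"
      with step.IH show ?case by (meson rtrancl_into_rtrancl trancl_into_trancl)
    next
      assume "(y, z) \<in> E"
      with step.IH show ?case by (meson E_step trancl_into_rtrancl rtrancl.rtrancl_refl)
    qed
  qed blast
  show ?thesis
    unfolding acyclic_def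
  proof (intro allI notI)
    fix x
    assume "(x, x) \<in> (D \<union> E)\<^sup>+"
    with through_E \<open>acyclic D\<close> obtain a b where "(x, a) \<in> D\<^sup>*" "(a, b) \<in> E" "(b, x) \<in> D\<^sup>*"
      unfolding acyclic_def by blast
    then have "(b, a) \<in> D\<^sup>*" by simp
    then have "(b, a) \<in> E\<^sup>=" using D_within_E \<open>(a, b) \<in> E\<close> by (auto simp: Field_def)
    then have "(a, a) \<in> E" using \<open>(a, b) \<in> E\<close> \<open>trans E\<close> unfolding trans_def by blast
    then show False using \<open>irrefl E\<close> unfolding irrefl_def by blast
  qed
qed

lemma successively_if_sorted_wrt_imp:
  assumes "sorted_wrt (\<lambda>a b. P a b \<longrightarrow> Q a b) xs" and "successively P xs"
  shows "successively Q xs"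
  using assms by (induction xs rule: induct_list012) auto

lemma consistent_DAG_extending_orientation:
  assumes wf: "wf_pdag V D U" and acyclic: "acyclic (D \<union> E)"
  shows "\<exists>D' \<in> consistent_DAGs V D U. \<forall>a b. (a, b) \<in> E \<longrightarrow> adj D U a b \<longrightarrow> (a, b) \<in> D'"
proof -
  have "finite V" and D_V: "D \<subseteq> V \<times> V" and "sym U"
    and adj_V: "\<And>a b. adj D U a b \<Longrightarrow> a \<in> V \<and> b \<in> V \<and> a \<noteq> b"
    using wf unfolding wf_pdag_def adj_def by blast+
  have adj_sym: "adj D U a b \<Longrightarrow> adj D U b a" for a b
    using \<open>sym U\<close> unfolding adj_def sym_def by blast
  obtain f :: "'a \<Rightarrow> nat" where "inj_on f V"
    and f_mono: "\<forall>a b. (a, b) \<in> D \<union> E \<longrightarrow> a \<in> V \<longrightarrow> b \<in> V \<longrightarrow> f a < f b"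
    using finite_acyclic_injective_rank[OF \<open>finite V\<close> acyclic] by blast
  define D' where "D' = {(a, b). adj D U a b \<and> f a < f b}"
  have "(x, y) \<in> D'\<^sup>+ \<Longrightarrow> f x < f y" for x y
    by (induction rule: trancl_induct) (auto simp: D'_def)
  then have "acyclic D'" unfolding acyclic_def by blast
  moreover have "wf_pdag V D' {}"
    using \<open>finite V\<close> adj_V unfolding wf_pdag_def sym_def by (auto simp: D'_def)
  moreover have "D \<subseteq> D'"
    using f_mono D_V unfolding D'_def adj_def by auto
  moreover have "adj D' {} a b \<longleftrightarrow> adj D U a b" for a b
  proof
    assume "adj D U a b"
    moreover from this have "f a \<noteq> f b" using adj_V \<open>inj_on f V\<close> unfolding inj_on_def by blast
    ultimately show "adj D' {} a b" using adj_sym unfolding D'_def adj_def by (auto simp: linorder_neq_iff)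
  next
    assume "adj D' {} a b"
    then have "(a, b) \<in> D' \<or> (b, a) \<in> D'" unfolding adj_def by simp
    then have "adj D U a b \<or> adj D U b a" unfolding D'_def by blast
    then show "adj D U a b" using adj_sym by blast
  qed
  ultimately have "D' \<in> consistent_DAGs V D U"
    unfolding consistent_DAGs_def is_DAG_def by simp
  moreover have "\<forall>a b. (a, b) \<in> E \<longrightarrow> adj D U a b \<longrightarrow> (a, b) \<in> D'"
    using f_mono adj_V unfolding D'_def by blast
  ultimately show ?thesis by blast
qed

lemma consistent_DAG_along_list:
  assumes wf: "wf_pdag V D U" and "acyclic D" and "distinct q"
    and no_back_path: "sorted_wrt (\<lambda>a b. (b, a) \<notin> D\<^sup>+) q"
  shows "\<exists>D' \<in> consistent_DAGs V D U. sorted_wrt (\<lambda>a b. adj D U a b \<longrightarrow> (a, b) \<in> D') q"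
proof -
  define E where "E = {(q ! i, q ! j) | i j. i < j \<and> j < length q}"
  have E_iff: "(a, b) \<in> E \<longleftrightarrow> (\<exists>i j. i < j \<and> j < length q \<and> a = q ! i \<and> b = q ! j)" for a b
    unfolding E_def by blast
  have "trans E"
  proof (rule transI)
    fix a b c assume "(a, b) \<in> E" "(b, c) \<in> E"
    then obtain i j j' k where "i < j" "j < length q" "j' < k" "k < length q"
      and "a = q ! i" "b = q ! j" "b = q ! j'" "c = q ! k"
      unfolding E_iff by metis
    moreover from this have "j = j'" using \<open>distinct q\<close> nth_eq_iff_index_eq by (metis order.strict_trans)
    ultimately show "(a, c) \<in> E" unfolding E_iff by (metis order.strict_trans)
  qed
  moreover have "irrefl E"
    using \<open>distinct q\<close> unfolding irrefl_def E_iff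
    by (metis less_not_refl nth_eq_iff_index_eq order.strict_trans)
  moreover have "(a, b) \<in> E\<^sup>=" if path: "(a, b) \<in> D\<^sup>*" and "a \<in> Field E" "b \<in> Field E" for a b
  proof -
    have "Field E \<subseteq> set q" unfolding E_def Field_def by auto
    then obtain i j where ij: "i < length q" "j < length q" "a = q ! i" "b = q ! j"
      using \<open>a \<in> Field E\<close> \<open>b \<in> Field E\<close> by (metis in_set_conv_nth subsetD)
    have "\<not> j < i"
    proof
      assume "j < i"
      then have "(a, b) \<notin> D\<^sup>+" and "a \<noteq> b"
        using no_back_path \<open>distinct q\<close> ij by (auto simp: sorted_wrt_iff_nth_less nth_eq_iff_index_eq)
      then show False using path by (simp add: rtrancl_eq_or_trancl)
    qed
    then have "i = j \<or> (a, b) \<in> E" using ij E_iff by (metis linorder_neqE_nat)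
    then show ?thesis using ij by auto
  qed
  ultimately have "acyclic (D \<union> E)"
    by (rule acyclic_Un_strict_order[OF \<open>acyclic D\<close>])
  then obtain D' where "D' \<in> consistent_DAGs V D U"
    and "\<forall>a b. (a, b) \<in> E \<longrightarrow> adj D U a b \<longrightarrow> (a, b) \<in> D'"
    using consistent_DAG_extending_orientation[OF wf] by blast
  then show ?thesis unfolding E_def sorted_wrt_iff_nth_less by blast
qed

context
  fixes V :: "'v set" and D U :: "('v \<times> 'v) set"
  assumes wf: "wf_pdag V D U" and acyclic_D: "acyclic D"
    and meek_closed: "\<And>a b. \<not> meek_applicable D U a b"
begin

lemma undirected_sym: "(a, b) \<in> U \<Longrightarrow> (b, a) \<in> U"
  using wf unfolding wf_pdag_def sym_def by blast

lemma undirected_not_directed: "(a, b) \<in> U \<Longrightarrow> (a, b) \<notin> D \<and> (b, a) \<notin> D"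
  using wf undirected_sym unfolding wf_pdag_def by blast

lemma parent_of_undirected_endpoint:
  assumes "(a, b) \<in> U" and "(c, a) \<in> D"
  shows "(c, b) \<in> D \<or> (c, b) \<in> U"
proof -
  have "c \<noteq> b" using assms undirected_not_directed by blast
  then have "adj D U c b"
    using assms meek_closed[of a b] unfolding meek_applicable_def by blast
  moreover have "(b, c) \<notin> D"
    using assms undirected_sym meek_closed[of b a] unfolding meek_applicable_def by blast
  ultimately show ?thesis unfolding adj_def by blast
qed

lemma grandparent_shortcut:
  assumes ab: "(a, b) \<in> U" and cb: "(c, b) \<in> U" and ca: "(c, a) \<in> D" and dc: "(d, c) \<in> D"
  shows "(d, b) \<in> D \<or> (d, a) \<in> D"
proof (rule ccontr)
  assume neither: "\<not> ((d, b) \<in> D \<or> (d, a) \<in> D)"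
  then have db: "(d, b) \<in> U" using parent_of_undirected_endpoint[OF cb dc] by blast
  have "a \<noteq> d" using ca dc wf unfolding wf_pdag_def by blast
  moreover have "\<not> adj D U a d"
  proof
    assume "adj D U a d"
    moreover have "(a, d) \<notin> D"
    proof
      assume "(a, d) \<in> D"
      with dc ca have "(a, a) \<in> D\<^sup>+" by (meson trancl.r_into_trancl trancl_into_trancl)
      then show False using acyclic_D unfolding acyclic_def by blast
    qed
    moreover have "(a, d) \<notin> U"
      using dc ca undirected_sym meek_closed[of d a] unfolding meek_applicable_def by blast
    ultimately show False using neither unfolding adj_def by blast
  qed
  moreover have "adj D U b c" using undirected_sym[OF cb] unfolding adj_def by blast
  ultimately show False
    using undirected_sym[OF ab] undirected_sym[OF db] dc ca meek_closed[of b a]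
    unfolding meek_applicable_def by blast
qed

text \<open>Strong induction on the length of the path is needed: when its last two edges are
\<open>d \<rightarrow> c \<rightarrow> a\<close> with \<open>c - b\<close>, R4 yields \<open>d \<rightarrow> a\<close>, and the new path through \<open>d\<close> is shorter but does not
extend the old path to \<open>c\<close>.\<close>

lemma directed_path_into_undirected_edge:
  assumes ab: "(a, b) \<in> U" and "(x, a) \<in> D\<^sup>+"
  shows "(x, a) \<in> D \<or> (x, b) \<in> D\<^sup>+"
proof -
  have "(x, a) \<in> D \<or> (x, b) \<in> D\<^sup>+" if "(x, a) \<in> D ^^ Suc m" for m
    using that
  proof (induction m rule: less_induct)
    case (less m)
    then obtain c where xc: "(x, c) \<in> D ^^ m" and ca: "(c, a) \<in> D" by (auto elim: relpow_Suc_E)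
    from parent_of_undirected_endpoint[OF ab ca] show ?case
    proof
      assume "(c, b) \<in> D"
      with xc have "(x, b) \<in> D ^^ Suc m" by auto
      then show ?case using trancl_power by blast
    next
      assume cb: "(c, b) \<in> U"
      show ?case
      proof (cases m)
        case 0
        then show ?thesis using xc ca by simp
      next
        case (Suc k)
        with xc obtain d where xd: "(x, d) \<in> D ^^ k" and dc: "(d, c) \<in> D" by (auto elim: relpow_Suc_E)
        from grandparent_shortcut[OF ab cb ca dc] show ?thesis
        proof
          assume "(d, b) \<in> D"
          with xd have "(x, b) \<in> D ^^ Suc k" by auto
          then show ?thesis using trancl_power by blast
        next
          assume "(d, a) \<in> D"
          with xd have "(x, a) \<in> D ^^ Suc k" by auto
          then show ?thesis using less.IH Suc by blast
        qed
      qed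
    qed
  qed
  moreover obtain m where "(x, a) \<in> D ^^ Suc m"
    using \<open>(x, a) \<in> D\<^sup>+\<close> by (metis trancl_power gr0_conv_Suc)
  ultimately show ?thesis by blast
qed

lemma undirected_not_trancl: "(a, b) \<in> U \<Longrightarrow> (a, b) \<notin> D\<^sup>+"
  using directed_path_into_undirected_edge[OF undirected_sym, of a b a]
    undirected_not_directed acyclic_D unfolding acyclic_def by blast

lemma possibly_causal_no_directed_path_back:
  assumes "successively (adj D U) p" and "sorted_wrt (\<lambda>a b. (b, a) \<notin> D) p"
  shows "sorted_wrt (\<lambda>a b. (b, a) \<notin> D\<^sup>+) p"
  using assms
proof (induction p rule: induct_list012)
  case (3 a b rest)
  then have tail: "sorted_wrt (\<lambda>a b. (b, a) \<notin> D\<^sup>+) (b # rest)" by simp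
  moreover have "(y, a) \<notin> D\<^sup>+" if y: "y \<in> set (b # rest)" for y
  proof
    assume ya: "(y, a) \<in> D\<^sup>+"
    have "(y, a) \<notin> D" "(b, a) \<notin> D" using "3.prems"(2) y by auto
    moreover have "(y, b) \<notin> D\<^sup>+"
      using tail y acyclic_D unfolding acyclic_def by auto
    moreover have "adj D U a b" using "3.prems"(1) by simp
    ultimately show False
      using ya directed_path_into_undirected_edge[of a b y] unfolding adj_def
      by (meson trancl_into_trancl)
  qed
  ultimately show ?case by simp
qed simp_all

end

theorem mainTheorem8:
  fixes V :: "'v set" and D U :: "('v \<times> 'v) set" and X Y Z :: "'v set"
  assumes "is_MPDAG V D U"
    and "X \<subseteq> V" and "Y \<subseteq> V" and "Z \<subseteq> V"
    and "X \<inter> Y = {}" and "X \<inter> Z = {}" and "Y \<inter> Z = {}"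
    and "\<exists>p. good_path V D U X Y Z p"
  shows "\<exists>q D1 D2. good_path V D U X Y Z q
     \<and> D1 \<in> consistent_DAGs V D U \<and> D2 \<in> consistent_DAGs V D U
     \<and> (\<forall>i. Suc i < length q \<longrightarrow> (q ! i, q ! Suc i) \<in> D1)
     \<and> (q ! 1, q ! 0) \<in> D2
     \<and> (\<forall>i. 0 < i \<and> Suc i < length q \<longrightarrow> (q ! i, q ! Suc i) \<in> D2)"
proof -
  have wf: "wf_pdag V D U" and acyclic_D: "acyclic D" and closed: "\<And>a b. \<not> meek_applicable D U a b"
    using assms(1) unfolding is_MPDAG_def meek_closure_def by auto
  obtain q where good: "good_path V D U X Y Z q" using assms(8) by blast
  then have "distinct q" and adj_q: "successively (adj D U) q"
    and causal: "sorted_wrt (\<lambda>a b. (b, a) \<notin> D) q" and "(q ! 0, q ! 1) \<in> U" and "2 \<le> length q"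
    unfolding good_path_def is_path_def possibly_causal_def successively_conv_nth sorted_wrt_iff_nth_less
    by auto
  then obtain x0 x1 rest where q: "q = x0 # x1 # rest" and x0x1: "(x0, x1) \<in> U"
    by (auto simp: Suc_le_length_iff numeral_2_eq_2)
  have no_back: "sorted_wrt (\<lambda>a b. (b, a) \<notin> D\<^sup>+) q"
    using possibly_causal_no_directed_path_back[OF wf acyclic_D closed adj_q causal] .
  have "sorted_wrt (\<lambda>a b. (b, a) \<notin> D\<^sup>+) (x1 # x0 # rest)"
    using no_back undirected_not_trancl[OF wf acyclic_D closed x0x1] unfolding q by auto
  moreover have "distinct (x1 # x0 # rest)" using \<open>distinct q\<close> unfolding q by auto
  ultimately obtain D2 where D2: "D2 \<in> consistent_DAGs V D U"
    and D2_order: "sorted_wrt (\<lambda>a b. adj D U a b \<longrightarrow> (a, b) \<in> D2) (x1 # x0 # rest)"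
    using consistent_DAG_along_list[OF wf acyclic_D] by blast
  obtain D1 where D1: "D1 \<in> consistent_DAGs V D U"
    and D1_order: "sorted_wrt (\<lambda>a b. adj D U a b \<longrightarrow> (a, b) \<in> D1) q"
    using consistent_DAG_along_list[OF wf acyclic_D \<open>distinct q\<close> no_back] by blast
  have "successively (\<lambda>a b. (a, b) \<in> D1) q"
    using successively_if_sorted_wrt_imp[OF D1_order adj_q] .
  moreover have "successively (\<lambda>a b. (a, b) \<in> D2) (tl q)"
    using successively_if_sorted_wrt_imp[of "adj D U" _ "x1 # rest"] D2_order adj_q unfolding q by simp
  moreover have "(q ! 1, q ! 0) \<in> D2"
    using D2_order undirected_sym[OF wf acyclic_D closed x0x1] unfolding adj_def q by simp
  ultimately show ?thesis
    using good D1 D2 q by (intro exI[of _ q] exI[of _ D1] exI[of _ D2])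
      (auto simp: successively_conv_nth nth_tl gr0_conv_Suc)
qed

end
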